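(* Let $(\mu_n)_{n\ge0}$ be a non-increasing sequence of positive numbers such that $\sum_{n=0}^\infty\mu_n<\infty$. Then the restrictions $H^1_\mu:\ell^1_A\to\ell^1_A$ and $C^1_\mu:\ell^1_A\to\ell^1_A$ of $H_\mu$ and $C_\mu$ are nuclear operators. Moreover, the operator $H_\mu:\ell^\infty_A\to\ell^\infty_A$ satisfies $H_\mu=(H^1_\mu)^*$ and is a compact operator.
   Context: $\ell^p_A$ ($1\le p<\infty$) is the space of $f(z)=\sum_{n\ge0}a_nz^n\in H(\mathbb{D})$ with $\|f\|_p^p=\sum_n|a_n|^p<\infty$, and $\ell^\infty_A$ those with $\|f\|_\infty=\sup_n|a_n|<\infty$; functions are identified with coefficient sequences, so $\ell^\infty_A=(\ell^1_A)^*$ via $\langle x,y\rangle=\sum_nx_ny_n$. $H_\mu:\ell^\infty_A\to\ell^\infty_A$, $H_\mu((a_n)_{n\ge0})=\left(\sum_{n=0}^\infty\mu_{n+k}a_n\right)_{k\ge0}$ and $C_\mu:\ell^\infty_A\to\ell^\infty_A$, $C_\mu((a_n)_{n\ge0})=\left(\mu_k\sum_{n=0}^ka_n\right)_{k\ge0}$. An operator $T:X\to Y$ is nuclear if $T=\sum_nx_n^*(\cdot)y_n$ with $x_n^*\in X^*$, $y_n\in Y$, $\sum_n\|x_n^*\|\|y_n\|<\infty$. *)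

theory Defs
  imports "HOL-Analysis.Analysis"
begin

text \<open>Elements of the spaces are identified with their coefficient sequences.\<close>

definition ell1 :: "(nat \<Rightarrow> complex) set" where
  "ell1 = {a. summable (\<lambda>n. norm (a n))}"

definition norm1 :: "(nat \<Rightarrow> complex) \<Rightarrow> real" where
  "norm1 a = (\<Sum>n. norm (a n))"

definition ellinf :: "(nat \<Rightarrow> complex) set" where
  "ellinf = {a. bounded (range a)}"

definition norminf :: "(nat \<Rightarrow> complex) \<Rightarrow> real" where
  "norminf a = (SUP n. norm (a n))"

definition pairing :: "(nat \<Rightarrow> complex) \<Rightarrow> (nat \<Rightarrow> complex) \<Rightarrow> complex" where
  "pairing x y = (\<Sum>n. x n * y n)"

definition Hmu :: "(nat \<Rightarrow> real) \<Rightarrow> (nat \<Rightarrow> complex) \<Rightarrow> (nat \<Rightarrow> complex)" where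
  "Hmu \<mu> a = (\<lambda>k. \<Sum>n. complex_of_real (\<mu> (n + k)) * a n)"

definition Cmu :: "(nat \<Rightarrow> real) \<Rightarrow> (nat \<Rightarrow> complex) \<Rightarrow> (nat \<Rightarrow> complex)" where
  "Cmu \<mu> a = (\<lambda>k. complex_of_real (\<mu> k) * (\<Sum>n\<le>k. a n))"

text \<open>Nuclear operator ell1 -> ell1: T = sum_n x_n^*(.) y_n with x_n^* in (ell1)^* = ellinf
  (acting via the pairing), y_n in ell1, and sum ||x_n^*|| ||y_n|| < infinity;
  the series converges in the ell1 norm.\<close>
definition nuclear_ell1 :: "((nat \<Rightarrow> complex) \<Rightarrow> (nat \<Rightarrow> complex)) \<Rightarrow> bool" where
  "nuclear_ell1 T \<longleftrightarrow>
    (\<exists>xs ys :: nat \<Rightarrow> nat \<Rightarrow> complex.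
       (\<forall>n. xs n \<in> ellinf \<and> ys n \<in> ell1) \<and>
       summable (\<lambda>n. norminf (xs n) * norm1 (ys n)) \<and>
       (\<forall>x\<in>ell1. T x \<in> ell1 \<and>
          (\<lambda>N. norm1 (\<lambda>k. T x k - (\<Sum>n<N. pairing x (xs n) * ys n k))) \<longlonglongrightarrow> 0))"

definition compact_ellinf :: "((nat \<Rightarrow> complex) \<Rightarrow> (nat \<Rightarrow> complex)) \<Rightarrow> bool" where
  "compact_ellinf T \<longleftrightarrow>
    (\<forall>a\<in>ellinf. T a \<in> ellinf) \<and>
    (\<forall>a\<in>ellinf. \<forall>b\<in>ellinf. \<forall>c::complex.
        T (\<lambda>k. a k + b k) = (\<lambda>k. T a k + T b k) \<and> T (\<lambda>k. c * a k) = (\<lambda>k. c * T a k)) \<and>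
    (\<forall>x :: nat \<Rightarrow> nat \<Rightarrow> complex. (\<forall>n. x n \<in> ellinf \<and> norminf (x n) \<le> 1) \<longrightarrow>
       (\<exists>r y. strict_mono r \<and> y \<in> ellinf \<and>
          (\<lambda>n. norminf (\<lambda>k. T (x (r n)) k - y k)) \<longlonglongrightarrow> 0))"

end

theory Submission
  imports Defs
begin

(* On l^1 both operators act as T x = (<x, r_k>)_k with rows r_k in l^oo of norm at most mu_k
   (r_k = (mu_(n+k))_n for H_mu, and mu_k times the indicator of {0..k} for C_mu), so
   T = sum_k <-, r_k> e_k is a nuclear representation as soon as mu is summable.
   The duality <H_mu x, a> = <x, H_mu a> is Fubini for the absolutely summable double series
   sum_(n,k) x_n mu_(n+k) a_k.  For compactness, H_mu maps the unit ball of l^oo into sequences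
   dominated by the tails t_k = sum_n mu_(n+k), which tend to 0; a pointwise convergent
   subsequence (Tychonoff) is therefore uniformly convergent. *)

lemma norm_le_norminf: "a \<in> ellinf \<Longrightarrow> norm (a n) \<le> norminf a"
  unfolding ellinf_def norminf_def
  by (intro cSUP_upper) (auto simp: bounded_iff bdd_above_def)

lemma norminf_le: "(\<And>n. norm (a n) \<le> M) \<Longrightarrow> norminf a \<le> M"
  unfolding norminf_def by (intro cSUP_least) auto

lemma ellinfI: "(\<And>n. norm (a n) \<le> M) \<Longrightarrow> a \<in> ellinf"
  unfolding ellinf_def bounded_iff by auto

lemma norminf_nonneg: "a \<in> ellinf \<Longrightarrow> 0 \<le> norminf a"
  using norm_le_norminf[of a 0] norm_ge_zero order_trans by blast

lemma summable_norm_mult_bounded: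
  fixes a b :: "nat \<Rightarrow> 'a::real_normed_algebra"
  assumes "summable (\<lambda>n. norm (a n))" and "\<And>n. norm (b n) \<le> M"
  shows "summable (\<lambda>n. norm (a n * b n))"
  by (rule summable_comparison_test'[where N=0, OF summable_mult2[OF assms(1), of M]])
    (simp add: order_trans[OF norm_mult_ineq mult_left_mono[OF assms(2) norm_ge_zero]])

lemma norm_pairing_le:
  assumes "x \<in> ell1" and "\<And>n. norm (b n) \<le> M"
  shows "norm (pairing x b) \<le> M * norm1 x"
proof -
  have x: "summable (\<lambda>n. norm (x n))"
    using assms(1) by (simp add: ell1_def)
  have xb: "summable (\<lambda>n. norm (x n * b n))"
    by (rule summable_norm_mult_bounded[OF x assms(2)])
  have "norm (pairing x b) \<le> (\<Sum>n. norm (x n * b n))"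
    unfolding pairing_def by (rule summable_norm[OF xb])
  also have "\<dots> \<le> (\<Sum>n. norm (x n) * M)"
    by (intro suminf_le xb summable_mult2 x) (simp add: norm_mult mult_left_mono assms(2))
  also have "\<dots> = M * norm1 x"
    by (simp add: norm1_def suminf_mult[OF x] mult.commute)
  finally show ?thesis .
qed

lemma tendsto_suminf_tail:
  fixes f :: "nat \<Rightarrow> 'a::real_normed_vector"
  assumes "summable f"
  shows "(\<lambda>k. \<Sum>n. f (n + k)) \<longlonglongrightarrow> 0"
  using tendsto_diff[OF tendsto_const summable_LIMSEQ[OF assms], of "suminf f"]
  by (simp add: suminf_minus_initial_segment[OF assms])

lemma infsum_eq_suminf:
  fixes f :: "nat \<Rightarrow> 'a::{topological_comm_monoid_add, t2_space}"
  assumes "f summable_on UNIV"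
  shows "infsum f UNIV = suminf f"
  using has_sum_imp_sums[OF has_sum_infsum[OF assms]] by (rule sums_unique)

lemma suminf_swap_abs_summable:
  fixes F :: "nat \<Rightarrow> nat \<Rightarrow> 'a::banach"
  assumes "(\<lambda>(n, k). norm (F n k)) summable_on UNIV \<times> UNIV"
  shows "(\<Sum>n. \<Sum>k. F n k) = (\<Sum>k. \<Sum>n. F n k)"
proof -
  (* qualified names: Infinite_Set_Sum declares a homonymous abs_summable_on *)
  have abs: "Infinite_Sum.abs_summable_on (\<lambda>(n, k). F n k) (UNIV \<times> UNIV)"
    using assms by (simp add: case_prod_unfold)
  have abs': "Infinite_Sum.abs_summable_on (\<lambda>(k, n). F n k) (UNIV \<times> UNIV)"
    using summable_on_swap[THEN iffD1, OF abs] by (simp add: case_prod_unfold)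
  have rows: "F n summable_on UNIV" for n
    using abs Infinite_Sum.abs_summable_on_Sigma_iff[of "\<lambda>(n, k). F n k" UNIV "\<lambda>_. UNIV"]
    by (auto intro: abs_summable_summable)
  have cols: "(\<lambda>n. F n k) summable_on UNIV" for k
    using abs' Infinite_Sum.abs_summable_on_Sigma_iff[of "\<lambda>(k, n). F n k" UNIV "\<lambda>_. UNIV"]
    by (auto intro: abs_summable_summable)
  have sum: "(\<lambda>(n, k). F n k) summable_on UNIV \<times> UNIV"
    using abs by (rule abs_summable_summable)
  have sum': "(\<lambda>(k, n). F n k) summable_on UNIV \<times> UNIV"
    using abs' by (rule abs_summable_summable)
  have "(\<Sum>n. \<Sum>k. F n k) = infsum (\<lambda>n. infsum (F n) UNIV) UNIV"
    using summable_on_Sigma_banach[OF sum] rows by (simp add: infsum_eq_suminf)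
  also have "\<dots> = infsum (\<lambda>k. infsum (\<lambda>n. F n k) UNIV) UNIV"
    using infsum_swap_banach[OF sum] .
  also have "\<dots> = (\<Sum>k. \<Sum>n. F n k)"
    using summable_on_Sigma_banach[OF sum'] cols by (simp add: infsum_eq_suminf)
  finally show ?thesis .
qed

lemma abs_summable_on_dominated_by_product:
  fixes F :: "nat \<Rightarrow> nat \<Rightarrow> 'a::real_normed_vector"
  assumes "\<And>n k. norm (F n k) \<le> g n * h k" and "summable g" and "summable h"
    and "\<And>n. 0 \<le> g n" and "\<And>k. 0 \<le> h k"
  shows "(\<lambda>(n, k). norm (F n k)) summable_on UNIV \<times> UNIV"
proof -
  have "((\<lambda>k. g n * h k) has_sum (g n * suminf h)) UNIV" for n
    using assms by (intro sums_nonneg_imp_has_sum sums_mult summable_sums) auto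
  moreover have "(\<lambda>n. g n * suminf h) summable_on UNIV"
    using assms by (subst summable_on_UNIV_nonneg_real_iff)
      (auto intro!: summable_mult2 mult_nonneg_nonneg suminf_nonneg)
  ultimately have "(\<lambda>(n, k). g n * h k) summable_on UNIV \<times> UNIV"
    using assms by (intro summable_on_SigmaI[where g="\<lambda>n. g n * suminf h"]) auto
  then show ?thesis
    by (rule summable_on_comparison_test) (auto simp: assms(1))
qed

lemma nuclear_ell1_if_summable_rows:
  assumes rows: "\<And>k. r k \<in> ellinf" and summable_rows: "summable (\<lambda>k. norminf (r k))"
    and T: "\<And>x k. x \<in> ell1 \<Longrightarrow> T x k = pairing x (r k)"
  shows "nuclear_ell1 T"
proof -
  define e :: "nat \<Rightarrow> nat \<Rightarrow> complex" where "e n = (\<lambda>j. if j = n then 1 else 0)" for n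
  have e_sums: "(\<lambda>j. norm (e n j)) sums 1" for n
    using sums_single[of n "\<lambda>_. 1::real"] by (simp add: e_def if_distrib cong: if_cong)
  have e: "e n \<in> ell1" "norm1 (e n) = 1" for n
    using e_sums[of n] by (auto simp: ell1_def norm1_def sums_iff)
  have "T x \<in> ell1 \<and> (\<lambda>N. norm1 (\<lambda>k. T x k - (\<Sum>n<N. pairing x (r n) * e n k))) \<longlonglongrightarrow> 0"
    if x: "x \<in> ell1" for x
  proof
    have "norm (T x k) \<le> norminf (r k) * norm1 x" for k
      unfolding T[OF x] by (rule norm_pairing_le[OF x norm_le_norminf[OF rows]])
    then have Tx: "summable (\<lambda>k. norm (T x k))"
      by (intro summable_comparison_test'[where N=0, OF summable_mult2[OF summable_rows]]) auto
    then show "T x \<in> ell1"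
      by (simp add: ell1_def)
    have "norm1 (\<lambda>k. T x k - (\<Sum>n<N. pairing x (r n) * e n k)) = (\<Sum>k. norm (T x (k + N)))" for N
    proof -
      have truncate:
        "(\<lambda>k. T x k - (\<Sum>n<N. pairing x (r n) * e n k)) = (\<lambda>k. if k < N then 0 else T x k)"
        by (auto simp: e_def T[OF x] if_distrib cong: if_cong)
      have "summable (\<lambda>k. norm (if k < N then 0 else T x k))"
        by (rule summable_comparison_test'[where N=0, OF Tx]) auto
      from suminf_split_initial_segment[OF this, of N] show ?thesis
        unfolding norm1_def truncate by simp
    qed
    then show "(\<lambda>N. norm1 (\<lambda>k. T x k - (\<Sum>n<N. pairing x (r n) * e n k))) \<longlonglongrightarrow> 0"
      using tendsto_suminf_tail[OF Tx] by simp
  qed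
  then show ?thesis
    unfolding nuclear_ell1_def using rows e summable_rows by (intro exI[of _ r] exI[of _ e]) auto
qed

lemma pointwise_convergent_subseq_if_bounded:
  fixes f :: "nat \<Rightarrow> nat \<Rightarrow> 'a::{real_normed_vector, heine_borel}"
  assumes "\<And>n k. norm (f n k) \<le> t k"
  shows "\<exists>r y. strict_mono r \<and> (\<forall>k. norm (y k) \<le> t k) \<and> (\<forall>k. (\<lambda>n. f (r n) k) \<longlonglongrightarrow> y k)"
proof -
  define S where "S = PiE UNIV (\<lambda>k. cball (0::'a) (t k))"
  have "compactin (product_topology (\<lambda>_. euclidean) UNIV) S"
    unfolding S_def compactin_PiE by auto
  then have "seq_compact S"
    by (simp add: euclidean_product_topology compact_imp_seq_compact)
  moreover have "f n \<in> S" for n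
    using assms by (auto simp: S_def)
  ultimately obtain y r where y: "y \<in> S" and r: "strict_mono r" and lim: "(f \<circ> r) \<longlonglongrightarrow> y"
    unfolding seq_compact_def by meson
  have "(\<lambda>n. f (r n) k) \<longlonglongrightarrow> y k" for k
    using continuous_on_tendsto_compose[OF continuous_on_product_coordinates[of k] lim] by simp
  with y r show ?thesis
    by (intro exI[of _ r] exI[of _ y]) (auto simp: S_def)
qed

lemma uniform_limit_if_dominated_by_null:
  fixes f :: "nat \<Rightarrow> nat \<Rightarrow> 'a::real_normed_vector"
  assumes f: "\<And>n k. norm (f n k) \<le> t k" and y: "\<And>k. norm (y k) \<le> t k"
    and t: "t \<longlonglongrightarrow> 0" and pointwise: "\<And>k. (\<lambda>n. f n k) \<longlonglongrightarrow> y k"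
  shows "uniform_limit UNIV f y sequentially"
proof (rule uniform_limitI)
  fix e :: real assume "e > 0"
  then obtain K where K: "\<And>k. k \<ge> K \<Longrightarrow> t k < e / 2"
    using order_tendstoD(2)[OF t, of "e / 2"] by (auto simp: eventually_sequentially)
  have "uniform_limit (\<Union>k<K. {k}) f y sequentially"
    by (intro uniform_limit_on_UNION) (simp_all add: pointwise)
  then have "\<forall>\<^sub>F n in sequentially. \<forall>k\<in>{..<K}. dist (f n k) (y k) < e"
    using \<open>e > 0\<close> by (simp add: uniform_limitD)
  then show "\<forall>\<^sub>F n in sequentially. \<forall>k\<in>UNIV. dist (f n k) (y k) < e"
  proof (rule eventually_mono, intro ballI)
    fix n k assume head: "\<forall>k\<in>{..<K}. dist (f n k) (y k) < e"
    show "dist (f n k) (y k) < e"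
    proof (cases "k < K")
      case False
      have "dist (f n k) (y k) \<le> norm (f n k) + norm (y k)"
        unfolding dist_norm by (rule norm_triangle_ineq4)
      also have "\<dots> < e"
        using f[of n k] y[of k] K[of k] False by linarith
      finally show ?thesis .
    qed (use head in simp)
  qed
qed

lemma norminf_tendsto_zero_if_uniform_limit:
  assumes "uniform_limit UNIV f y sequentially"
  shows "(\<lambda>n. norminf (\<lambda>k. f n k - y k)) \<longlonglongrightarrow> 0"
proof (rule LIMSEQ_I)
  fix e :: real assume "e > 0"
  then obtain N where N: "\<And>n k. n \<ge> N \<Longrightarrow> norm (f n k - y k) \<le> e / 2"
    using uniform_limitD[OF assms, of "e / 2"]
    by (fastforce simp: eventually_sequentially dist_norm less_imp_le)
  have "norm (norminf (\<lambda>k. f n k - y k)) < e" if "n \<ge> N" for n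
  proof -
    have "0 \<le> norminf (\<lambda>k. f n k - y k)"
      using N[OF that] by (intro norminf_nonneg ellinfI)
    moreover have "norminf (\<lambda>k. f n k - y k) \<le> e / 2"
      using N[OF that] by (rule norminf_le)
    ultimately show ?thesis
      using \<open>e > 0\<close> by simp
  qed
  then show "\<exists>N. \<forall>n\<ge>N. norm (norminf (\<lambda>k. f n k - y k) - 0) < e"
    by auto
qed

lemma nuclear_ell1_Cmu:
  assumes "summable (\<lambda>k. \<bar>\<mu> k\<bar>)"
  shows "nuclear_ell1 (Cmu \<mu>)"
proof (rule nuclear_ell1_if_summable_rows)
  define r where "r k = (\<lambda>n. if n \<le> k then complex_of_real (\<mu> k) else 0)" for k
  have bound: "norm (r k n) \<le> \<bar>\<mu> k\<bar>" for k n
    by (simp add: r_def)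
  show rows: "r k \<in> ellinf" for k
    using bound by (rule ellinfI)
  show "summable (\<lambda>k. norminf (r k))"
    using bound norminf_nonneg[OF rows]
    by (intro summable_comparison_test'[where N=0, OF assms]) (simp add: norminf_le)
  show "Cmu \<mu> x k = pairing x (r k)" for x k
  proof -
    have "pairing x (r k) = (\<Sum>n\<le>k. x n * r k n)"
      unfolding pairing_def by (rule suminf_finite) (auto simp: r_def)
    also have "\<dots> = Cmu \<mu> x k"
      by (simp add: r_def Cmu_def sum_distrib_left mult.commute)
    finally show ?thesis ..
  qed
qed

lemma decseq_summable_nonneg:
  fixes \<mu> :: "nat \<Rightarrow> real"
  assumes "decseq \<mu>" and "summable \<mu>"
  shows "0 \<le> \<mu> n"
  using decseq_ge[OF assms(1) summable_LIMSEQ_zero[OF assms(2)]] .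

context
  fixes \<mu> :: "nat \<Rightarrow> real"
  assumes decreasing: "decseq \<mu>" and summable: "summable \<mu>"
begin

private lemma nonneg: "0 \<le> \<mu> n"
  using decreasing summable by (rule decseq_summable_nonneg)

private lemma shift_le: "\<mu> (n + k) \<le> \<mu> k"
  using decreasing by (simp add: decseq_def)

private lemma summable_shift: "summable (\<lambda>n. \<mu> (n + k))"
  using summable by (rule summable_ignore_initial_segment)

lemma summable_Hmu_terms:
  assumes "\<And>n. norm (a n) \<le> M"
  shows "summable (\<lambda>n. norm (complex_of_real (\<mu> (n + k)) * a n))"
  using summable_norm_mult_bounded[of "\<lambda>n. complex_of_real (\<mu> (n + k))" a M]
    summable_shift nonneg assms
  by simp

lemma norm_Hmu_le:
  assumes "\<And>n. norm (a n) \<le> M"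
  shows "norm (Hmu \<mu> a k) \<le> M * (\<Sum>n. \<mu> (n + k))"
proof -
  have "norm (Hmu \<mu> a k) \<le> (\<Sum>n. norm (complex_of_real (\<mu> (n + k)) * a n))"
    unfolding Hmu_def by (rule summable_norm[OF summable_Hmu_terms[OF assms]])
  also have "\<dots> \<le> (\<Sum>n. M * \<mu> (n + k))"
    using summable_Hmu_terms[OF assms] summable_shift nonneg
    by (intro suminf_le summable_mult) (auto simp: norm_mult mult.commute intro: mult_right_mono assms)
  also have "\<dots> = M * (\<Sum>n. \<mu> (n + k))"
    by (rule suminf_mult[OF summable_shift])
  finally show ?thesis .
qed

lemma suminf_shift_le: "(\<Sum>n. \<mu> (n + k)) \<le> suminf \<mu>"
  using decreasing by (intro suminf_le summable_shift summable) (simp add: decseq_def)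

lemma nuclear_ell1_Hmu: "nuclear_ell1 (Hmu \<mu>)"
proof (rule nuclear_ell1_if_summable_rows)
  define r where "r k = (\<lambda>n. complex_of_real (\<mu> (n + k)))" for k
  have bound: "norm (r k n) \<le> \<mu> k" for k n
    using nonneg shift_le by (simp add: r_def)
  show rows: "r k \<in> ellinf" for k
    using bound by (rule ellinfI)
  show "summable (\<lambda>k. norminf (r k))"
    using bound norminf_nonneg[OF rows]
    by (intro summable_comparison_test'[where N=0, OF summable]) (simp add: norminf_le)
  show "Hmu \<mu> x k = pairing x (r k)" for x k
    by (simp add: Hmu_def pairing_def r_def mult.commute)
qed

lemma Hmu_ellinf: "a \<in> ellinf \<Longrightarrow> Hmu \<mu> a \<in> ellinf"
  using norm_Hmu_le[OF norm_le_norminf] suminf_shift_le norminf_nonneg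
  by (intro ellinfI[where M="norminf a * suminf \<mu>"]) (meson mult_left_mono order_trans)

lemma pairing_Hmu:
  assumes x: "x \<in> ell1" and a: "a \<in> ellinf"
  shows "pairing (Hmu \<mu> x) a = pairing x (Hmu \<mu> a)"
proof -
  define F where "F n k = x n * (complex_of_real (\<mu> (k + n)) * a k)" for n k
  have x_summable: "summable (\<lambda>n. norm (x n))"
    using x by (simp add: ell1_def)
  have a_le: "norm (a k) \<le> norminf a" for k
    using a by (rule norm_le_norminf)
  have "0 \<le> norminf a"
    using a by (rule norminf_nonneg)
  have F_le: "norm (F n k) \<le> norm (x n) * (norminf a * \<mu> k)" for n k
  proof -
    have "norm (F n k) = norm (x n) * (\<mu> (n + k) * norm (a k))"
      using nonneg by (simp add: F_def norm_mult add.commute)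
    also have "\<dots> \<le> norm (x n) * (\<mu> k * norminf a)"
      using nonneg \<open>0 \<le> norminf a\<close> by (intro mult_left_mono mult_mono shift_le a_le) auto
    finally show ?thesis
      by (simp add: mult_ac)
  qed
  have "(\<lambda>(n, k). norm (F n k)) summable_on UNIV \<times> UNIV"
    using x_summable summable nonneg \<open>0 \<le> norminf a\<close>
    by (intro abs_summable_on_dominated_by_product[OF F_le]) (auto intro: summable_mult)
  then have swap: "(\<Sum>n. \<Sum>k. F n k) = (\<Sum>k. \<Sum>n. F n k)"
    by (rule suminf_swap_abs_summable)
  have column_summable: "summable (\<lambda>n. complex_of_real (\<mu> (n + k)) * x n)" for k
  proof -
    have "norm (complex_of_real (\<mu> (n + k))) \<le> \<mu> 0" for n
      using nonneg shift_le[of "n + k" 0] by simp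
    then have "summable (\<lambda>n. norm (x n * complex_of_real (\<mu> (n + k))))"
      by (rule summable_norm_mult_bounded[OF x_summable])
    then have "summable (\<lambda>n. norm (complex_of_real (\<mu> (n + k)) * x n))"
      by (simp add: norm_mult mult.commute)
    then show ?thesis
      by (rule summable_norm_cancel)
  qed
  have "pairing (Hmu \<mu> x) a = (\<Sum>k. \<Sum>n. complex_of_real (\<mu> (n + k)) * x n * a k)"
    unfolding pairing_def Hmu_def by (simp add: suminf_mult2[OF column_summable])
  also have "\<dots> = (\<Sum>k. \<Sum>n. F n k)"
    by (simp add: F_def mult_ac add.commute)
  also have "\<dots> = (\<Sum>n. \<Sum>k. F n k)"
    by (rule swap[symmetric])
  also have "\<dots> = (\<Sum>n. x n * (\<Sum>k. complex_of_real (\<mu> (k + n)) * a k))"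
    using summable_norm_cancel[OF summable_Hmu_terms[OF a_le]]
    unfolding F_def by (simp add: suminf_mult)
  also have "\<dots> = pairing x (Hmu \<mu> a)"
    by (simp add: pairing_def Hmu_def)
  finally show ?thesis .
qed

lemma Hmu_add:
  assumes "a \<in> ellinf" and "b \<in> ellinf"
  shows "Hmu \<mu> (\<lambda>k. a k + b k) = (\<lambda>k. Hmu \<mu> a k + Hmu \<mu> b k)"
  using summable_norm_cancel[OF summable_Hmu_terms[OF norm_le_norminf[OF assms(1)]]]
    summable_norm_cancel[OF summable_Hmu_terms[OF norm_le_norminf[OF assms(2)]]]
  by (simp add: Hmu_def distrib_left suminf_add)

lemma Hmu_mult:
  assumes "a \<in> ellinf"
  shows "Hmu \<mu> (\<lambda>k. c * a k) = (\<lambda>k. c * Hmu \<mu> a k)"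
  using summable_norm_cancel[OF summable_Hmu_terms[OF norm_le_norminf[OF assms]]]
  by (simp add: Hmu_def suminf_mult[symmetric] mult.left_commute)

lemma compact_ellinf_Hmu: "compact_ellinf (Hmu \<mu>)"
  unfolding compact_ellinf_def
proof (intro conjI ballI allI impI)
  fix x :: "nat \<Rightarrow> nat \<Rightarrow> complex"
  assume "\<forall>n. x n \<in> ellinf \<and> norminf (x n) \<le> 1"
  then have x_le: "norm (x n k) \<le> 1" for n k
    by (meson norm_le_norminf order_trans)
  define t where "t k = (\<Sum>n. \<mu> (n + k))" for k
  have bound: "norm (Hmu \<mu> (x n) k) \<le> t k" for n k
    using norm_Hmu_le[of "x n" 1] x_le by (simp add: t_def)
  then obtain r y where r: "strict_mono r" and y: "\<And>k. norm (y k) \<le> t k"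
    and pointwise: "\<And>k. (\<lambda>n. Hmu \<mu> (x (r n)) k) \<longlonglongrightarrow> y k"
    using pointwise_convergent_subseq_if_bounded[of "\<lambda>n. Hmu \<mu> (x n)" t] by blast
  have "t \<longlonglongrightarrow> 0"
    unfolding t_def using summable by (rule tendsto_suminf_tail)
  with bound y pointwise have "uniform_limit UNIV (\<lambda>n. Hmu \<mu> (x (r n))) y sequentially"
    by (intro uniform_limit_if_dominated_by_null)
  then have "(\<lambda>n. norminf (\<lambda>k. Hmu \<mu> (x (r n)) k - y k)) \<longlonglongrightarrow> 0"
    by (rule norminf_tendsto_zero_if_uniform_limit)
  moreover have "y \<in> ellinf"
    using y suminf_shift_le by (intro ellinfI[where M="suminf \<mu>"]) (metis order_trans t_def)
  ultimately show "\<exists>r y. strict_mono r \<and> y \<in> ellinf \<and>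
      (\<lambda>n. norminf (\<lambda>k. Hmu \<mu> (x (r n)) k - y k)) \<longlonglongrightarrow> 0"
    using r by blast
qed (simp_all add: Hmu_ellinf Hmu_add Hmu_mult)

end

theorem proposition29:
  fixes \<mu> :: "nat \<Rightarrow> real"
  assumes "\<And>n. \<mu> n > 0"
    and "decseq \<mu>"
    and "summable \<mu>"
  shows "nuclear_ell1 (Hmu \<mu>) \<and> nuclear_ell1 (Cmu \<mu>) \<and>
    (\<forall>a\<in>ellinf. Hmu \<mu> a \<in> ellinf \<and>
           (\<forall>x\<in>ell1. pairing (Hmu \<mu> x) a = pairing x (Hmu \<mu> a))) \<and>
    compact_ellinf (Hmu \<mu>)"
proof -
  have "summable (\<lambda>k. \<bar>\<mu> k\<bar>)"
    using assms(1,3) by (simp add: less_imp_le)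
  then show ?thesis
    using assms(2,3)
    by (simp add: nuclear_ell1_Hmu nuclear_ell1_Cmu Hmu_ellinf pairing_Hmu compact_ellinf_Hmu)
qed

end
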